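(* Let $G=(V,E)$ be an undirected graph, define $p_1(\emptyset)=0$, $p_1(V)=|E|$, $p_1(X)=i_G(X)+1$ for $\emptyset\subset X\subset V$, and $B_1=\{x\in\mathbb{R}^V:\widetilde x(V)=p_1(V),\ \widetilde x(X)\ge p_1(X)\ \forall X\subset V\}$. Let $D$ be a strongly connected orientation of $G$ with in-degree vector $m$ and let $s,t\in V$. Then $m+\chi_s-\chi_t\in B_1$ if and only if $D$ contains two arc-disjoint directed paths from $s$ to $t$.
   Context: $i_G(X)$ is the number of edges with both end-nodes in $X$; $\widetilde x(X)=\sum_{v\in X}x(v)$; $\chi_v$ is the unit vector of $v$; $m(v)=\varrho_D(v)$ is the number of arcs with head $v$. *)

theory Defs
  imports Main "HOL-Library.Indicator_Function"
begin

text \<open>An undirected (multi)graph G = (V,E): E is a finite set of edge identifiers,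
  ends e is the set of end-nodes of e (one node for a loop, two otherwise).\<close>
definition ugraph :: "'v set \<Rightarrow> 'e set \<Rightarrow> ('e \<Rightarrow> 'v set) \<Rightarrow> bool" where
  "ugraph V E ends \<longleftrightarrow> finite V \<and> finite E \<and>
     (\<forall>e\<in>E. ends e \<subseteq> V \<and> 1 \<le> card (ends e) \<and> card (ends e) \<le> 2)"

definition orientation :: "'e set \<Rightarrow> ('e \<Rightarrow> 'v set) \<Rightarrow> ('e \<Rightarrow> 'v) \<Rightarrow> ('e \<Rightarrow> 'v) \<Rightarrow> bool" where
  "orientation E ends tail head \<longleftrightarrow> (\<forall>e\<in>E. {tail e, head e} = ends e)"

text \<open>A directed path from s to t in D, given as its list of arcs; its node
  sequence s, head a1, head a2, ... has no repeated node and ends in t.\<close>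
definition dpath :: "'e set \<Rightarrow> ('e \<Rightarrow> 'v) \<Rightarrow> ('e \<Rightarrow> 'v) \<Rightarrow> 'v \<Rightarrow> 'v \<Rightarrow> 'e list \<Rightarrow> bool" where
  "dpath E tail head s t P \<longleftrightarrow> set P \<subseteq> E \<and>
     (\<forall>i < length P. tail (P ! i) = (s # map head P) ! i) \<and>
     distinct (s # map head P) \<and> last (s # map head P) = t"

definition strongly_connected :: "'v set \<Rightarrow> 'e set \<Rightarrow> ('e \<Rightarrow> 'v) \<Rightarrow> ('e \<Rightarrow> 'v) \<Rightarrow> bool" where
  "strongly_connected V E tail head \<longleftrightarrow> (\<forall>u\<in>V. \<forall>v\<in>V. \<exists>P. dpath E tail head u v P)"

definition iG :: "'e set \<Rightarrow> ('e \<Rightarrow> 'v set) \<Rightarrow> 'v set \<Rightarrow> nat" where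
  "iG E ends X = card {e\<in>E. ends e \<subseteq> X}"

definition p1 :: "'v set \<Rightarrow> 'e set \<Rightarrow> ('e \<Rightarrow> 'v set) \<Rightarrow> 'v set \<Rightarrow> real" where
  "p1 V E ends X = (if X = {} then 0 else if X = V then real (card E) else real (iG E ends X) + 1)"

definition B1 :: "'v set \<Rightarrow> 'e set \<Rightarrow> ('e \<Rightarrow> 'v set) \<Rightarrow> ('v \<Rightarrow> real) set" where
  "B1 V E ends = {x. sum x V = p1 V E ends V \<and> (\<forall>X. X \<subseteq> V \<longrightarrow> sum x X \<ge> p1 V E ends X)}"

definition indeg :: "'e set \<Rightarrow> ('e \<Rightarrow> 'v) \<Rightarrow> 'v \<Rightarrow> nat" where
  "indeg E head v = card {e\<in>E. head e = v}"

end

theory Submission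
  imports Defs
begin

text \<open>
  Write \<open>x = m + \<chi>\<^sub>s - \<chi>\<^sub>t\<close> and \<open>\<rho>(X)\<close> for the number of arcs of \<open>D\<close> entering \<open>X\<close>.
  Counting heads gives \<open>x(X) = i\<^sub>G(X) + \<rho>(X) + [s \<in> X] - [t \<in> X]\<close>, and strong connectivity
  gives \<open>\<rho>(X) \<ge> 1\<close> for every proper nonempty \<open>X\<close>. Hence \<open>x \<in> B\<^sub>1\<close> exactly when
  \<open>\<rho>(X) \<ge> 2\<close> for every \<open>X\<close> containing \<open>t\<close> but not \<open>s\<close>, and by the arc version of Menger's
  theorem this cut condition is equivalent to two arc-disjoint \<open>s\<close>-\<open>t\<close> paths.

  Menger's theorem is proved by augmenting paths: an arc set whose net outflow is
  \<open>k(\<chi>\<^sub>s - \<chi>\<^sub>t)\<close> has an \<open>s\<close>-\<open>t\<close> path in its residual graph as long as all cuts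
  separating \<open>t\<close> from \<open>s\<close> have more than \<open>k\<close> arcs, and augmenting along it yields
  net outflow \<open>(k+1)(\<chi>\<^sub>s - \<chi>\<^sub>t)\<close>. From an arc set with net outflow
  \<open>2(\<chi>\<^sub>s - \<chi>\<^sub>t)\<close> two arc-disjoint paths are then peeled off one after the other.
\<close>

fun walk :: "('e \<Rightarrow> 'v) \<Rightarrow> ('e \<Rightarrow> 'v) \<Rightarrow> 'v \<Rightarrow> 'e list \<Rightarrow> 'v \<Rightarrow> bool" where
  "walk tail head u [] v \<longleftrightarrow> u = v"
| "walk tail head u (e # P) v \<longleftrightarrow> tail e = u \<and> walk tail head (head e) P v"

lemma dpath_iff_walk:
  "dpath E tail head u v P \<longleftrightarrow> set P \<subseteq> E \<and> walk tail head u P v \<and> distinct (u # map head P)"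
proof -
  have "(\<forall>i < length P. tail (P ! i) = (u # map head P) ! i) \<and> last (u # map head P) = v
        \<longleftrightarrow> walk tail head u P v" for u
  proof (induction P arbitrary: u)
    case (Cons e P)
    have "(\<forall>i < length (e # P). tail ((e # P) ! i) = (u # map head (e # P)) ! i) \<longleftrightarrow>
          tail e = u \<and> (\<forall>i < length P. tail (P ! i) = (head e # map head P) ! i)"
      by (auto simp: less_Suc_eq_0_disj)
    with Cons.IH[of "head e"] show ?case by simp
  qed simp
  then show ?thesis unfolding dpath_def by blast
qed

lemma walk_suffix:
  assumes "walk tail head w P v" "distinct (w # map head P)" "u \<in> set (w # map head P)"
  shows "\<exists>P'. set P' \<subseteq> set P \<and> walk tail head u P' v \<and> distinct (u # map head P')"
  using assms
proof (induction P arbitrary: w)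
  case (Cons e P)
  show ?case
  proof (cases "u = w")
    case True
    with Cons.prems show ?thesis by blast
  next
    case False
    with Cons.prems have "walk tail head (head e) P v" "distinct (head e # map head P)"
      "u \<in> set (head e # map head P)" by auto
    with Cons.IH show ?thesis by (meson set_subset_Cons subset_trans)
  qed
qed auto

lemma walk_enters:
  "walk tail head u P v \<Longrightarrow> u \<notin> X \<Longrightarrow> v \<in> X \<Longrightarrow> \<exists>e\<in>set P. tail e \<notin> X \<and> head e \<in> X"
  by (induction P arbitrary: u) auto

definition arc_rel :: "'e set \<Rightarrow> ('e \<Rightarrow> 'v) \<Rightarrow> ('e \<Rightarrow> 'v) \<Rightarrow> 'v \<Rightarrow> 'v \<Rightarrow> bool" where
  "arc_rel F tail head u v \<longleftrightarrow> (\<exists>e\<in>F. tail e = u \<and> head e = v)"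

lemma dpath_of_reachable:
  assumes "(arc_rel F tail head)\<^sup>*\<^sup>* u v"
  shows "\<exists>P. dpath F tail head u v P"
  using assms
proof (induction rule: converse_rtranclp_induct)
  case base
  show ?case by (rule exI[of _ "[]"]) (simp add: dpath_iff_walk)
next
  case (step u w)
  then obtain e where e: "e \<in> F" "tail e = u" "head e = w" by (auto simp: arc_rel_def)
  from step.IH obtain P where P: "set P \<subseteq> F" "walk tail head w P v" "distinct (w # map head P)"
    by (auto simp: dpath_iff_walk)
  show ?case
  proof (cases "u \<in> set (w # map head P)")
    case True
    with walk_suffix[OF P(2,3) True] P(1) show ?thesis by (auto simp: dpath_iff_walk)
  next
    case False
    with e P show ?thesis by (intro exI[of _ "e # P"]) (auto simp: dpath_iff_walk)
  qed
qed

definition entering_arcs :: "'e set \<Rightarrow> ('e \<Rightarrow> 'v) \<Rightarrow> ('e \<Rightarrow> 'v) \<Rightarrow> 'v set \<Rightarrow> 'e set" where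
  "entering_arcs F tail head X = {e\<in>F. tail e \<notin> X \<and> head e \<in> X}"

abbreviation leaving_arcs :: "'e set \<Rightarrow> ('e \<Rightarrow> 'v) \<Rightarrow> ('e \<Rightarrow> 'v) \<Rightarrow> 'v set \<Rightarrow> 'e set" where
  "leaving_arcs F tail head X \<equiv> entering_arcs F head tail X"

lemma dpath_enters:
  "dpath F tail head u v P \<Longrightarrow> u \<notin> X \<Longrightarrow> v \<in> X \<Longrightarrow> set P \<inter> entering_arcs F tail head X \<noteq> {}"
  using walk_enters[of tail head u P v X] by (fastforce simp: dpath_iff_walk entering_arcs_def)

lemma reachable_of_cuts:
  assumes arcs: "\<forall>e\<in>F. tail e \<in> V" and "t \<in> V"
    and cuts: "\<forall>X\<subseteq>V. t \<in> X \<longrightarrow> s \<notin> X \<longrightarrow> entering_arcs F tail head X \<noteq> {}"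
  shows "(arc_rel F tail head)\<^sup>*\<^sup>* s t"
proof (rule ccontr)
  assume "\<not> (arc_rel F tail head)\<^sup>*\<^sup>* s t"
  define X where "X = {w\<in>V. \<not> (arc_rel F tail head)\<^sup>*\<^sup>* s w}"
  have "X \<subseteq> V" "t \<in> X" "s \<notin> X"
    using \<open>t \<in> V\<close> \<open>\<not> (arc_rel F tail head)\<^sup>*\<^sup>* s t\<close> by (auto simp: X_def)
  with cuts obtain e where "e \<in> F" "tail e \<notin> X" "head e \<in> X"
    by (auto simp: entering_arcs_def)
  with arcs have "(arc_rel F tail head)\<^sup>*\<^sup>* s (tail e)" "\<not> (arc_rel F tail head)\<^sup>*\<^sup>* s (head e)"
    by (auto simp: X_def)
  with \<open>e \<in> F\<close> show False
    by (meson arc_rel_def rtranclp.rtrancl_into_rtrancl)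
qed

definition st_vector :: "'v \<Rightarrow> 'v \<Rightarrow> 'v \<Rightarrow> int" where
  "st_vector s t w = of_bool (w = s) - of_bool (w = t)"

definition net_outflow :: "'e set \<Rightarrow> ('e \<Rightarrow> 'v) \<Rightarrow> ('e \<Rightarrow> 'v) \<Rightarrow> 'v \<Rightarrow> int" where
  "net_outflow F tail head w = (\<Sum>e\<in>F. of_bool (tail e = w) - of_bool (head e = w))"

lemma net_outflow_union:
  "finite A \<Longrightarrow> finite B \<Longrightarrow> A \<inter> B = {} \<Longrightarrow>
   net_outflow (A \<union> B) tail head w = net_outflow A tail head w + net_outflow B tail head w"
  unfolding net_outflow_def by (rule sum.union_disjoint)

lemma net_outflow_diff:
  "finite F \<Longrightarrow> A \<subseteq> F \<Longrightarrow> net_outflow (F - A) tail head w = net_outflow F tail head w - net_outflow A tail head w"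
  unfolding net_outflow_def by (simp add: sum_diff finite_subset)

lemma net_outflow_dpath:
  assumes "dpath F tail head u v P"
  shows "net_outflow (set P) tail head = st_vector u v"
proof
  fix w
  have "walk tail head u P v" "distinct P"
    using assms by (auto simp: dpath_iff_walk distinct_map)
  then show "net_outflow (set P) tail head w = st_vector u v w"
    by (induction P arbitrary: u) (auto simp: net_outflow_def st_vector_def)
qed

lemma sum_net_outflow:
  assumes "finite X" "finite F"
  shows "(\<Sum>w\<in>X. net_outflow F tail head w)
    = int (card (leaving_arcs F tail head X)) - int (card (entering_arcs F tail head X))"
proof -
  have point: "(\<Sum>w\<in>X. of_bool (a = w) :: int) = of_bool (a \<in> X)" for a
    using assms(1) by (simp add: sum.delta)
  have "(\<Sum>w\<in>X. net_outflow F tail head w)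
      = (\<Sum>e\<in>F. \<Sum>w\<in>X. of_bool (tail e = w) - of_bool (head e = w))"
    unfolding net_outflow_def by (rule sum.swap)
  also have "\<dots> = (\<Sum>e\<in>F. of_bool (e \<in> leaving_arcs F tail head X) - of_bool (e \<in> entering_arcs F tail head X))"
    by (intro sum.cong) (auto simp: sum_subtractf point entering_arcs_def)
  also have "\<dots> = int (card (leaving_arcs F tail head X)) - int (card (entering_arcs F tail head X))"
    using assms(2) by (simp add: sum_subtractf entering_arcs_def Int_def)
  finally show ?thesis .
qed

lemma reachable_of_net_outflow:
  assumes "finite V" "finite F" "\<forall>e\<in>F. tail e \<in> V" "t \<in> V"
    and conserve: "\<forall>w\<in>V. w \<noteq> s \<longrightarrow> w \<noteq> t \<longrightarrow> net_outflow F tail head w = 0"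
    and sink: "net_outflow F tail head t < 0"
  shows "(arc_rel F tail head)\<^sup>*\<^sup>* s t"
proof (rule reachable_of_cuts[OF assms(3,4)], intro allI impI)
  fix X assume X: "X \<subseteq> V" "t \<in> X" "s \<notin> X"
  from X(1) \<open>finite V\<close> have "finite X" by (rule finite_subset)
  have "(\<Sum>w\<in>X. net_outflow F tail head w) = net_outflow F tail head t"
    using X conserve \<open>finite X\<close> by (subst sum.mono_neutral_right[of X "{t}"]) auto
  with sink sum_net_outflow[OF \<open>finite X\<close> \<open>finite F\<close>]
  show "entering_arcs F tail head X \<noteq> {}" by auto
qed

lemma sum_st_vector:
  "finite X \<Longrightarrow> (\<Sum>w\<in>X. st_vector s t w) = of_bool (s \<in> X) - of_bool (t \<in> X)"
  by (simp add: st_vector_def sum_subtractf eq_commute[of _ s] eq_commute[of _ t])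

text \<open>\<open>Inl e\<close> is an arc \<open>e \<in> E - F\<close> in its own direction, \<open>Inr e\<close> an arc \<open>e \<in> F\<close> reversed.\<close>
definition residual_arcs :: "'e set \<Rightarrow> 'e set \<Rightarrow> ('e + 'e) set" where
  "residual_arcs E F = Inl ` (E - F) \<union> Inr ` F"

lemma net_outflow_residual:
  assumes "finite Q"
  shows "net_outflow Q (case_sum tail head) (case_sum head tail) w
    = net_outflow (Inl -` Q) tail head w - net_outflow (Inr -` Q) tail head w"
proof -
  have split: "Inl ` (Inl -` Q) \<union> Inr ` (Inr -` Q) = Q"
  proof (intro equalityI subsetI)
    fix x assume "x \<in> Q"
    then show "x \<in> Inl ` (Inl -` Q) \<union> Inr ` (Inr -` Q)" by (cases x) auto
  qed auto
  have "net_outflow (Inl ` (Inl -` Q) \<union> Inr ` (Inr -` Q)) (case_sum tail head) (case_sum head tail) w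
      = net_outflow (Inl ` (Inl -` Q)) (case_sum tail head) (case_sum head tail) w
      + net_outflow (Inr ` (Inr -` Q)) (case_sum tail head) (case_sum head tail) w"
    by (rule net_outflow_union) (use assms in auto)
  then have "net_outflow Q (case_sum tail head) (case_sum head tail) w
      = net_outflow (Inl ` (Inl -` Q)) (case_sum tail head) (case_sum head tail) w
      + net_outflow (Inr ` (Inr -` Q)) (case_sum tail head) (case_sum head tail) w"
    unfolding split .
  also have "\<dots> = net_outflow (Inl -` Q) tail head w - net_outflow (Inr -` Q) tail head w"
    by (simp add: net_outflow_def sum.reindex sum_subtractf del: image_vimage_eq)
  finally show ?thesis .
qed

lemma residual_reachable:
  assumes "finite V" "finite E" and arcs: "\<forall>e\<in>E. tail e \<in> V \<and> head e \<in> V"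
    and "t \<in> V" "F \<subseteq> E"
    and flow: "net_outflow F tail head = (\<lambda>w. int k * st_vector s t w)"
    and cuts: "\<forall>X\<subseteq>V. t \<in> X \<longrightarrow> s \<notin> X \<longrightarrow> k < card (entering_arcs E tail head X)"
  shows "(arc_rel (residual_arcs E F) (case_sum tail head) (case_sum head tail))\<^sup>*\<^sup>* s t"
proof (rule reachable_of_cuts)
  show "\<forall>e\<in>residual_arcs E F. case_sum tail head e \<in> V"
    using arcs \<open>F \<subseteq> E\<close> by (auto simp: residual_arcs_def)
  show "t \<in> V" by fact
  show "\<forall>X\<subseteq>V. t \<in> X \<longrightarrow> s \<notin> X \<longrightarrow>
      entering_arcs (residual_arcs E F) (case_sum tail head) (case_sum head tail) X \<noteq> {}"
  proof (intro allI impI notI)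
    fix X
    assume X: "X \<subseteq> V" "t \<in> X" "s \<notin> X"
      and none: "entering_arcs (residual_arcs E F) (case_sum tail head) (case_sum head tail) X = {}"
    have "finite X" "finite F"
      using X(1) \<open>finite V\<close> \<open>F \<subseteq> E\<close> \<open>finite E\<close> by (auto intro: finite_subset)
    from none have "leaving_arcs F tail head X = {}"
      by (force simp: entering_arcs_def residual_arcs_def)
    moreover from none \<open>F \<subseteq> E\<close> have "entering_arcs E tail head X = entering_arcs F tail head X"
      by (force simp: entering_arcs_def residual_arcs_def)
    moreover have "(\<Sum>w\<in>X. net_outflow F tail head w) = - int k"
      using X \<open>finite X\<close> by (simp add: flow sum_distrib_left[symmetric] sum_st_vector)
    ultimately have "card (entering_arcs E tail head X) = k"
      using sum_net_outflow[OF \<open>finite X\<close> \<open>finite F\<close>] by simp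
    with cuts X show False by auto
  qed
qed

lemma augment_flow:
  assumes "finite V" "finite E" "\<forall>e\<in>E. tail e \<in> V \<and> head e \<in> V"
    and "t \<in> V" "F \<subseteq> E"
    and flow: "net_outflow F tail head = (\<lambda>w. int k * st_vector s t w)"
    and "\<forall>X\<subseteq>V. t \<in> X \<longrightarrow> s \<notin> X \<longrightarrow> k < card (entering_arcs E tail head X)"
  shows "\<exists>F'\<subseteq>E. net_outflow F' tail head = (\<lambda>w. int (Suc k) * st_vector s t w)"
proof -
  obtain Q where Q: "dpath (residual_arcs E F) (case_sum tail head) (case_sum head tail) s t Q"
    using dpath_of_reachable[OF residual_reachable[OF assms]] by blast
  define cancelled where "cancelled = Inr -` set Q"
  define added where "added = Inl -` set Q"
  have "set Q \<subseteq> residual_arcs E F"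
    using Q by (simp add: dpath_def)
  then have "cancelled \<subseteq> F" "added \<subseteq> E - F"
    by (auto simp: cancelled_def added_def residual_arcs_def)
  moreover have "finite F"
    using \<open>F \<subseteq> E\<close> \<open>finite E\<close> by (rule finite_subset)
  moreover have "finite added"
    using \<open>added \<subseteq> E - F\<close> \<open>finite E\<close> by (auto intro: finite_subset)
  moreover have "(F - cancelled) \<inter> added = {}"
    using \<open>added \<subseteq> E - F\<close> by blast
  ultimately have update: "net_outflow (F - cancelled \<union> added) tail head w
      = net_outflow F tail head w + (net_outflow added tail head w - net_outflow cancelled tail head w)" for w
    by (simp add: net_outflow_union net_outflow_diff)
  have augmenting: "net_outflow added tail head w - net_outflow cancelled tail head w = st_vector s t w" for w
    using net_outflow_residual[of "set Q" tail head w] net_outflow_dpath[OF Q]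
    by (simp add: cancelled_def added_def)
  show ?thesis
    using \<open>F \<subseteq> E\<close> \<open>added \<subseteq> E - F\<close>
    by (intro exI[of _ "F - cancelled \<union> added"]) (auto simp: fun_eq_iff update augmenting flow algebra_simps)
qed

lemma peel_dpath:
  assumes "finite V" "finite F" "\<forall>e\<in>F. tail e \<in> V" "t \<in> V" "s \<noteq> t"
    and flow: "net_outflow F tail head = (\<lambda>w. int (Suc k) * st_vector s t w)"
  shows "\<exists>P. dpath F tail head s t P \<and> net_outflow (F - set P) tail head = (\<lambda>w. int k * st_vector s t w)"
proof -
  have "(arc_rel F tail head)\<^sup>*\<^sup>* s t"
    using \<open>s \<noteq> t\<close> by (intro reachable_of_net_outflow[OF assms(1-4)]) (auto simp: flow st_vector_def)
  then obtain P where P: "dpath F tail head s t P"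
    by (blast dest: dpath_of_reachable)
  then have "set P \<subseteq> F" by (simp add: dpath_def)
  have "net_outflow (F - set P) tail head w = int k * st_vector s t w" for w
    using net_outflow_diff[OF \<open>finite F\<close> \<open>set P \<subseteq> F\<close>, of tail head w]
    by (simp add: flow net_outflow_dpath[OF P] algebra_simps)
  with P show ?thesis by blast
qed

lemma two_arc_disjoint_dpaths_of_cuts:
  assumes "finite V" "finite E" and arcs: "\<forall>e\<in>E. tail e \<in> V \<and> head e \<in> V" and "t \<in> V"
    and cuts: "\<forall>X\<subseteq>V. t \<in> X \<longrightarrow> s \<notin> X \<longrightarrow> 2 \<le> card (entering_arcs E tail head X)"
  shows "\<exists>P Q. dpath E tail head s t P \<and> dpath E tail head s t Q \<and> set P \<inter> set Q = {}"
proof (cases "s = t")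
  case True
  then have "dpath E tail head s t []" by (simp add: dpath_def)
  then show ?thesis by (intro exI[of _ "[]"]) simp
next
  case False
  have cuts_less: "\<forall>X\<subseteq>V. t \<in> X \<longrightarrow> s \<notin> X \<longrightarrow> k < card (entering_arcs E tail head X)"
    if "k < 2" for k
    using cuts that less_le_trans by blast
  have "net_outflow {} tail head = (\<lambda>w. int 0 * st_vector s t w)"
    by (simp add: net_outflow_def fun_eq_iff)
  from augment_flow[OF assms(1-4) empty_subsetI this cuts_less] obtain F1 where
    "F1 \<subseteq> E" "net_outflow F1 tail head = (\<lambda>w. int (Suc 0) * st_vector s t w)"
    by auto
  from augment_flow[OF assms(1-4) this cuts_less] obtain F2 where F2: "F2 \<subseteq> E"
      "net_outflow F2 tail head = (\<lambda>w. int (Suc (Suc 0)) * st_vector s t w)"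
    by auto
  have "finite F2" "\<forall>e\<in>F2. tail e \<in> V"
    using F2(1) \<open>finite E\<close> arcs by (auto intro: finite_subset)
  then obtain P where P: "dpath F2 tail head s t P"
      "net_outflow (F2 - set P) tail head = (\<lambda>w. int (Suc 0) * st_vector s t w)"
    using peel_dpath[OF \<open>finite V\<close> _ _ \<open>t \<in> V\<close> False F2(2)] by blast
  obtain Q where "dpath (F2 - set P) tail head s t Q"
    using peel_dpath[OF \<open>finite V\<close> _ _ \<open>t \<in> V\<close> False P(2)] \<open>finite F2\<close> \<open>\<forall>e\<in>F2. tail e \<in> V\<close>
    by blast
  with P(1) F2(1) show ?thesis
    by (intro exI[of _ P] exI[of _ Q]) (auto simp: dpath_def)
qed

lemma two_arc_disjoint_dpaths_cross_cut:
  assumes "finite E" "dpath E tail head s t P" "dpath E tail head s t Q" "set P \<inter> set Q = {}"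
    and "s \<notin> X" "t \<in> X"
  shows "2 \<le> card (entering_arcs E tail head X)"
proof -
  obtain e1 e2 where "e1 \<in> set P" "e2 \<in> set Q" and sub: "{e1, e2} \<subseteq> entering_arcs E tail head X"
    using dpath_enters[OF assms(2,5,6)] dpath_enters[OF assms(3,5,6)] by blast
  with \<open>set P \<inter> set Q = {}\<close> have "card {e1, e2} = 2"
    by (metis card_2_iff disjoint_iff)
  moreover have "finite (entering_arcs E tail head X)"
    using \<open>finite E\<close> by (simp add: entering_arcs_def)
  ultimately show ?thesis
    using card_mono[OF _ sub] by simp
qed

lemma two_arc_disjoint_dpaths_iff_cuts:
  assumes "finite V" "finite E" "\<forall>e\<in>E. tail e \<in> V \<and> head e \<in> V" "t \<in> V"
  shows "(\<forall>X\<subseteq>V. t \<in> X \<longrightarrow> s \<notin> X \<longrightarrow> 2 \<le> card (entering_arcs E tail head X)) \<longleftrightarrow>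
    (\<exists>P Q. dpath E tail head s t P \<and> dpath E tail head s t Q \<and> set P \<inter> set Q = {})"
proof
  assume "\<exists>P Q. dpath E tail head s t P \<and> dpath E tail head s t Q \<and> set P \<inter> set Q = {}"
  then obtain P Q where paths: "dpath E tail head s t P" "dpath E tail head s t Q" "set P \<inter> set Q = {}"
    by blast
  show "\<forall>X\<subseteq>V. t \<in> X \<longrightarrow> s \<notin> X \<longrightarrow> 2 \<le> card (entering_arcs E tail head X)"
    using two_arc_disjoint_dpaths_cross_cut[OF assms(2) paths] by simp
qed (rule two_arc_disjoint_dpaths_of_cuts[OF assms])

lemma orientation_arcs_in_vertices:
  assumes "ugraph V E ends" "orientation E ends tail head" "e \<in> E"
  shows "tail e \<in> V \<and> head e \<in> V"
  using assms by (auto simp: ugraph_def orientation_def)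

lemma sum_indeg_eq:
  assumes "finite E" "orientation E ends tail head" "finite X"
  shows "(\<Sum>v\<in>X. indeg E head v) = iG E ends X + card (entering_arcs E tail head X)"
proof -
  have ends: "ends e = {tail e, head e}" if "e \<in> E" for e
    using assms(2) that by (simp add: orientation_def)
  have "(\<Sum>v\<in>X. indeg E head v) = card (\<Union>v\<in>X. {e\<in>E. head e = v})"
    unfolding indeg_def using assms by (intro card_UN_disjoint[symmetric]) auto
  also have "(\<Union>v\<in>X. {e\<in>E. head e = v}) = {e\<in>E. ends e \<subseteq> X} \<union> entering_arcs E tail head X"
    by (auto simp: ends entering_arcs_def)
  also have "card \<dots> = iG E ends X + card (entering_arcs E tail head X)"
    unfolding iG_def using assms(1)
    by (intro card_Un_disjoint) (auto simp: ends entering_arcs_def)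
  finally show ?thesis .
qed

lemma strongly_connected_entering_arcs:
  assumes "strongly_connected V E tail head" "X \<subseteq> V" "X \<noteq> {}" "X \<noteq> V"
  shows "entering_arcs E tail head X \<noteq> {}"
proof -
  obtain u v where "u \<in> V - X" "v \<in> X"
    using assms(2-4) by blast
  with assms(1,2) obtain P where "dpath E tail head u v P"
    unfolding strongly_connected_def by blast
  from dpath_enters[OF this] \<open>u \<in> V - X\<close> \<open>v \<in> X\<close> show ?thesis by blast
qed

lemma sum_indeg_shifted:
  assumes "finite E" "orientation E ends tail head" "finite X"
  shows "(\<Sum>v\<in>X. real (indeg E head v) + indicator {s} v - indicator {t} v)
    = real (iG E ends X) + real (card (entering_arcs E tail head X)) + of_bool (s \<in> X) - of_bool (t \<in> X)"
proof -
  have indicator_sum: "(\<Sum>v\<in>X. indicator {a} v :: real) = of_bool (a \<in> X)" for a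
    using \<open>finite X\<close> by (simp add: indicator_def)
  have "(\<Sum>v\<in>X. real (indeg E head v)) = real (iG E ends X + card (entering_arcs E tail head X))"
    by (simp only: of_nat_sum[symmetric] sum_indeg_eq[OF assms])
  then show ?thesis
    by (simp add: sum.distrib sum_subtractf indicator_sum)
qed

lemma in_B1_iff_cuts:
  assumes G: "ugraph V E ends" and D: "orientation E ends tail head"
    and sc: "strongly_connected V E tail head" and "s \<in> V" "t \<in> V"
  shows "(\<lambda>v. real (indeg E head v) + indicator {s} v - indicator {t} v) \<in> B1 V E ends
    \<longleftrightarrow> (\<forall>X\<subseteq>V. t \<in> X \<longrightarrow> s \<notin> X \<longrightarrow> 2 \<le> card (entering_arcs E tail head X))"
    (is "?x \<in> _ \<longleftrightarrow> ?cuts")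
proof -
  have "finite V" "finite E"
    using G by (auto simp: ugraph_def)
  have sum_x: "sum ?x X = real (iG E ends X) + real (card (entering_arcs E tail head X))
      + of_bool (s \<in> X) - of_bool (t \<in> X)" if "X \<subseteq> V" for X
    using that \<open>finite V\<close> by (intro sum_indeg_shifted[OF \<open>finite E\<close> D]) (rule finite_subset)
  have "iG E ends V = card E" "entering_arcs E tail head V = {}"
    using orientation_arcs_in_vertices[OF G D] G
    by (auto simp: iG_def entering_arcs_def ugraph_def intro: arg_cong[where f=card])
  then have total: "sum ?x V = p1 V E ends V"
    using sum_x[of V] \<open>s \<in> V\<close> \<open>t \<in> V\<close> by (auto simp: p1_def)
  show ?thesis
  proof
    assume "?x \<in> B1 V E ends"
    then have lower: "sum ?x X \<ge> p1 V E ends X" if "X \<subseteq> V" for X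
      using that by (simp add: B1_def)
    show ?cuts
    proof (intro allI impI)
      fix X assume X: "X \<subseteq> V" "t \<in> X" "s \<notin> X"
      with \<open>s \<in> V\<close> have "p1 V E ends X = real (iG E ends X) + 1"
        by (auto simp: p1_def)
      with lower[OF X(1)] sum_x[OF X(1)] X show "2 \<le> card (entering_arcs E tail head X)"
        by simp
    qed
  next
    assume cuts: ?cuts
    have "sum ?x X \<ge> p1 V E ends X" if X: "X \<subseteq> V" for X
    proof (cases "X = {} \<or> X = V")
      case True
      with total show ?thesis by (auto simp: p1_def)
    next
      case False
      then have "p1 V E ends X = real (iG E ends X) + 1"
        by (auto simp: p1_def)
      moreover have "1 \<le> card (entering_arcs E tail head X)"
        using strongly_connected_entering_arcs[OF sc X] False \<open>finite E\<close>
        by (auto simp: Suc_le_eq card_gt_0_iff entering_arcs_def)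
      moreover have "t \<in> X \<Longrightarrow> s \<notin> X \<Longrightarrow> 2 \<le> card (entering_arcs E tail head X)"
        using cuts X by blast
      ultimately show ?thesis
        using sum_x[OF X] by (cases "s \<in> X"; cases "t \<in> X") auto
    qed
    with total show "?x \<in> B1 V E ends"
      by (simp add: B1_def)
  qed
qed

theorem claim6p3:
  fixes V :: "'v set" and E :: "'e set" and ends :: "'e \<Rightarrow> 'v set"
    and tail head :: "'e \<Rightarrow> 'v" and s t :: 'v
  assumes "ugraph V E ends"
    and "orientation E ends tail head"
    and "strongly_connected V E tail head"
    and "s \<in> V" and "t \<in> V"
  shows "(\<lambda>v. real (indeg E head v) + indicator {s} v - indicator {t} v) \<in> B1 V E ends
     \<longleftrightarrow> (\<exists>P Q. dpath E tail head s t P \<and> dpath E tail head s t Q \<and> set P \<inter> set Q = {})"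
proof -
  have "finite V" "finite E"
    using assms(1) by (auto simp: ugraph_def)
  moreover have "\<forall>e\<in>E. tail e \<in> V \<and> head e \<in> V"
    using orientation_arcs_in_vertices[OF assms(1,2)] by blast
  ultimately show ?thesis
    unfolding in_B1_iff_cuts[OF assms] using \<open>t \<in> V\<close> by (rule two_arc_disjoint_dpaths_iff_cuts)
qed

end
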